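(* Let $P$ be a CMS profile with $n$ voters and $m$ issues in which every voter's dependency graph has maximum in-degree at most $1$, and let $\rho>0$. For each voter $i$ and issue $I_j$, let $C_{ij}$ be the formula (true exactly when voter $i$ is dissatisfied with $I_j$) written in conjunctive normal form with at most $2$ clauses each containing at most $2$ literals, and let $P'$ be the Min 2-SAT instance consisting of the multiset of all clauses of all $C_{ij}$, $i\in[n]$, $j\in[m]$. Let $\mathrm{OPT}(P)$ be the optimal CMS cost of $P$ and $\mathrm{OPT}(P')$ the minimum number of satisfied clauses of $P'$ over all truth assignments. If $\mathrm{OPT}(P)\ge nm/\rho$, then $\mathrm{OPT}(P')\le(1+\rho)\,\mathrm{OPT}(P)$.
   Context: CMS: binary issues $I_1,\dots,I_m$ with domains $\{d_j,\overline{d_j}\}$, voters $1,\dots,n$; voter $i$ has a directed dependency graph $G_i$ on the issues and for each issue $I_j$ a set $B_i^j$ of approved statements $\{t:d\}$ ($d\in\{d_j,\overline{d_j}\}$, $t$ an assignment to the in-neighbours of $I_j$ in $G_i$). Under outcome $s$, voter $i$ is dissatisfied with $I_j$ if $\{t:s_j\}\notin B_i^j$ where $t$ is the projection of $s$ onto the in-neighbours of $I_j$; the cost of $s$ is the total number of (voter, issue) dissatisfactions, and $\mathrm{OPT}(P)$ is its minimum over outcomes. The variable $x_j$ true corresponds to $d_j$, false to $\overline{d_j}$. $C_{ij}$: if $I_j$ has no in-neighbour in $G_i$, it is the disjunction of $\overline{x}_j$ (if $\{d_j\}\notin B_i^j$) and $x_j$ (if $\{\overline{d_j}\}\notin B_i^j$);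 if $I_j$ has in-neighbour $I_k$, it is the disjunction over all $(a,b)$ with $\{a:b\}\notin B_i^j$ of the conjunction of the literals corresponding to $I_k=a$ and $I_j=b$. Min 2-SAT asks for a truth assignment minimizing the number of satisfied clauses. *)

theory Defs
  imports Main "HOL-Library.Multiset" Complex_Main
begin

text \<open>Issues are indexed 0..m-1, voters 0..n-1. An outcome / truth assignment is
  a function s :: nat => bool; s j = True means issue I_j takes value d_j
  (variable x_j true), False means the value is the complement of d_j.
  The dependency graph of a voter is a set of directed edges (k,j) meaning
  I_k is an in-neighbour of I_j.  A statement {t:d} is a pair (t,d) where
  t is a partial assignment (defined exactly on the in-neighbours) and d a value.\<close>

type_synonym statement = "(nat \<Rightarrow> bool option) \<times> bool"

definition proj_in :: "(nat \<times> nat) set \<Rightarrow> nat \<Rightarrow> (nat \<Rightarrow> bool) \<Rightarrow> (nat \<Rightarrow> bool option)" where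
  "proj_in E j s = (\<lambda>k. if (k, j) \<in> E then Some (s k) else None)"

definition dissatisfied ::
  "(nat \<Rightarrow> (nat \<times> nat) set) \<Rightarrow> (nat \<Rightarrow> nat \<Rightarrow> statement set) \<Rightarrow> nat \<Rightarrow> nat \<Rightarrow> (nat \<Rightarrow> bool) \<Rightarrow> bool" where
  "dissatisfied G B i j s \<longleftrightarrow> (proj_in (G i) j s, s j) \<notin> B i j"

definition cms_cost ::
  "nat \<Rightarrow> nat \<Rightarrow> (nat \<Rightarrow> (nat \<times> nat) set) \<Rightarrow> (nat \<Rightarrow> nat \<Rightarrow> statement set) \<Rightarrow> (nat \<Rightarrow> bool) \<Rightarrow> nat" where
  "cms_cost n m G B s = card {(i, j). i < n \<and> j < m \<and> dissatisfied G B i j s}"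

definition cms_opt ::
  "nat \<Rightarrow> nat \<Rightarrow> (nat \<Rightarrow> (nat \<times> nat) set) \<Rightarrow> (nat \<Rightarrow> nat \<Rightarrow> statement set) \<Rightarrow> nat" where
  "cms_opt n m G B = Min (range (cms_cost n m G B))"

type_synonym literal = "nat \<times> bool"
type_synonym clause = "literal list"

definition lit_sat :: "(nat \<Rightarrow> bool) \<Rightarrow> literal \<Rightarrow> bool" where
  "lit_sat s l \<longleftrightarrow> s (fst l) = snd l"

definition clause_sat :: "(nat \<Rightarrow> bool) \<Rightarrow> clause \<Rightarrow> bool" where
  "clause_sat s c \<longleftrightarrow> (\<exists>l \<in> set c. lit_sat s l)"

definition cnf_sat :: "(nat \<Rightarrow> bool) \<Rightarrow> clause list \<Rightarrow> bool" where
  "cnf_sat s F \<longleftrightarrow> (\<forall>c \<in> set F. clause_sat s c)"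

definition num_sat :: "clause multiset \<Rightarrow> (nat \<Rightarrow> bool) \<Rightarrow> nat" where
  "num_sat P s = size (filter_mset (clause_sat s) P)"

definition min2sat_opt :: "clause multiset \<Rightarrow> nat" where
  "min2sat_opt P = Min (range (num_sat P))"

end

theory Submission
  imports Defs
begin

text \<open>Evaluate the 2-SAT instance at an optimal CMS outcome s. Each C_ij has at most two
  clauses, and if voter i is satisfied with I_j then C_ij is false under s, so one of its
  clauses is unsatisfied. Hence C_ij contributes at most 1 satisfied clause, plus 1 more
  exactly when voter i is dissatisfied with I_j, giving OPT(P') \<le> nm + OPT(P); the
  hypothesis nm \<le> \<rho> OPT(P) finishes the proof.\<close>

lemma num_sat_sum: "num_sat (\<Sum>x\<in>X. f x) s = (\<Sum>x\<in>X. num_sat (f x) s)"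
  by (induction X rule: infinite_finite_induct) (simp_all add: num_sat_def)

lemma num_sat_mset: "num_sat (mset F) s = length (filter (clause_sat s) F)"
  by (simp add: num_sat_def flip: mset_filter)

lemma num_sat_le_size: "num_sat P s \<le> size P"
  unfolding num_sat_def by (rule size_filter_mset_lesseq)

lemma min2sat_opt_le: "min2sat_opt P \<le> num_sat P s"
proof -
  have "finite (range (num_sat P))"
    unfolding finite_nat_set_iff_bounded_le using num_sat_le_size by blast
  then show ?thesis
    unfolding min2sat_opt_def by (simp add: Min_le)
qed

lemma num_sat_mset_less_if_unsat:
  assumes "\<not> cnf_sat s F"
  shows "num_sat (mset F) s < length F"
proof -
  from assms obtain c where "c \<in> set F" "\<not> clause_sat s c"
    unfolding cnf_sat_def by blast
  then show ?thesis
    unfolding num_sat_mset by (rule length_filter_less)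
qed

lemma num_sat_two_clauses_le:
  assumes "length F \<le> 2"
  shows "num_sat (mset F) s \<le> 1 + of_bool (cnf_sat s F)"
proof (cases "cnf_sat s F")
  case True
  then show ?thesis
    using num_sat_le_size[of "mset F" s] assms by simp
next
  case False
  then show ?thesis
    using num_sat_mset_less_if_unsat[of s F] assms by simp
qed

lemma cms_cost_eq_sum:
  "cms_cost n m G B s = (\<Sum>i<n. \<Sum>j<m. of_bool (dissatisfied G B i j s))"
proof -
  have "(\<Sum>i<n. \<Sum>j<m. of_bool (dissatisfied G B i j s))
      = (\<Sum>p\<in>{..<n} \<times> {..<m}. of_bool (dissatisfied G B (fst p) (snd p) s) :: nat)"
    by (simp del: sum_of_bool_eq add: sum.cartesian_product split_def)
  also have "\<dots> = card ({..<n} \<times> {..<m} \<inter> {p. dissatisfied G B (fst p) (snd p) s})"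
    by simp
  also have "{..<n} \<times> {..<m} \<inter> {p. dissatisfied G B (fst p) (snd p) s}
      = {(i, j). i < n \<and> j < m \<and> dissatisfied G B i j s}"
    by auto
  finally show ?thesis
    unfolding cms_cost_def ..
qed

lemma cms_cost_le: "cms_cost n m G B s \<le> n * m"
proof -
  have "{(i, j). i < n \<and> j < m \<and> dissatisfied G B i j s} \<subseteq> {..<n} \<times> {..<m}"
    by auto
  then have "cms_cost n m G B s \<le> card ({..<n} \<times> {..<m})"
    unfolding cms_cost_def by (intro card_mono) auto
  then show ?thesis
    by (simp add: card_cartesian_product)
qed

lemma cms_opt_attained: "\<exists>s. cms_opt n m G B = cms_cost n m G B s"
proof -
  have "finite (range (cms_cost n m G B))"
    unfolding finite_nat_set_iff_bounded_le using cms_cost_le by blast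
  then have "cms_opt n m G B \<in> range (cms_cost n m G B)"
    unfolding cms_opt_def by (rule Min_in) simp
  then show ?thesis
    by blast
qed

lemma num_sat_reduction_le:
  assumes C_shape: "\<forall>i < n. \<forall>j < m. length (C i j) \<le> 2"
    and C_correct: "\<forall>i < n. \<forall>j < m. cnf_sat s (C i j) \<longleftrightarrow> dissatisfied G B i j s"
  shows "num_sat (\<Sum>i<n. \<Sum>j<m. mset (C i j)) s \<le> n * m + cms_cost n m G B s"
proof -
  have per_issue: "num_sat (mset (C i j)) s \<le> 1 + of_bool (dissatisfied G B i j s)"
    if "i < n" "j < m" for i j
    using num_sat_two_clauses_le[of "C i j" s] C_shape C_correct that by simp
  have "num_sat (\<Sum>i<n. \<Sum>j<m. mset (C i j)) s = (\<Sum>i<n. \<Sum>j<m. num_sat (mset (C i j)) s)"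
    by (simp add: num_sat_sum)
  also have "\<dots> \<le> (\<Sum>i<n. \<Sum>j<m. 1 + of_bool (dissatisfied G B i j s))"
    using per_issue by (intro sum_mono) auto
  also have "\<dots> = n * m + cms_cost n m G B s"
    by (simp only: cms_cost_eq_sum sum.distrib) simp
  finally show ?thesis .
qed

theorem lemma2:
  fixes n m :: nat
    and G :: "nat \<Rightarrow> (nat \<times> nat) set"
    and B :: "nat \<Rightarrow> nat \<Rightarrow> statement set"
    and C :: "nat \<Rightarrow> nat \<Rightarrow> clause list"
    and \<rho> :: real
  assumes graphs: "\<forall>i < n. G i \<subseteq> {..<m} \<times> {..<m}"
    and indeg: "\<forall>i < n. \<forall>j < m. card {k. (k, j) \<in> G i} \<le> 1"
    and rho_pos: "\<rho> > 0"
    and C_shape: "\<forall>i < n. \<forall>j < m. length (C i j) \<le> 2 \<and> (\<forall>c \<in> set (C i j). length c \<le> 2)"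
    and C_correct: "\<forall>i < n. \<forall>j < m. \<forall>s. cnf_sat s (C i j) \<longleftrightarrow> dissatisfied G B i j s"
    and large: "real (cms_opt n m G B) \<ge> real (n * m) / \<rho>"
  shows "real (min2sat_opt (\<Sum>i<n. \<Sum>j<m. mset (C i j)))
           \<le> (1 + \<rho>) * real (cms_opt n m G B)"
proof -
  let ?P' = "\<Sum>i<n. \<Sum>j<m. mset (C i j)"
  obtain s where s: "cms_opt n m G B = cms_cost n m G B s"
    using cms_opt_attained by blast
  have "min2sat_opt ?P' \<le> num_sat ?P' s"
    by (rule min2sat_opt_le)
  also have "\<dots> \<le> n * m + cms_opt n m G B"
    using num_sat_reduction_le[of n m C s G B] C_shape C_correct s by simp
  finally have "real (min2sat_opt ?P') \<le> real (n * m) + real (cms_opt n m G B)"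
    by linarith
  moreover have "real (n * m) \<le> \<rho> * real (cms_opt n m G B)"
    using large rho_pos by (simp add: divide_le_eq mult.commute)
  ultimately show ?thesis
    by (simp add: algebra_simps)
qed

end
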